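(* Let $\mathcal{V}\subset\mathbb{R}$ be finite and $\mathcal{W}\subset\mathcal{V}$ with $p:=|\mathcal{W}|$, and suppose the average of the elements of $\mathcal{V}$ and the average of the elements of $\mathcal{W}$ are both zero. Consider inputs with two components $z_1,z_2\in\{[v]:v\in\mathcal{V}\}$, where component $[v]$ has associated value $v$, and target $y([v_1],[v_2])=v_1+v_2$. The training set consists of all pairs $([v_1],[v_2])$ with at least one of $v_1,v_2$ in $\mathcal{W}$. Let the inputs be represented with a compositionally structured kernel $K$ with $K=\kappa_k$ for pairs of inputs sharing exactly $k\in\{0,1,2\}$ components, with $\kappa_2>\kappa_0$, and let $f$ be the kernel model (minimum $\ell_2$-norm linear readout) that fits the training data exactly. Then for every test pair $([v_1],[v_2])$ with $v_1,v_2\in\mathcal{V}\setminus\mathcal{W}$, $$f([v_1],[v_2])=m(v_1+v_2),\qquad m:=\frac{p\,S(1;2)}{1+(p-2)S(1;2)},$$ where $S(1;2)=\frac{\kappa_1-\kappa_0}{\kappa_2-\kappa_0}$.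
   Context: A kernel is compositionally structured iff the similarity of two inputs depends only on the number of components they share. The model is $f(x)=w^T\phi(x)$ with $w$ the minimum $\ell_2$-norm readout that exactly interpolates the training targets (the limit of gradient descent from $w_0=0$); in dual form $f(x)=\sum_i a_iK(x,x_i)$ with $\sum_j a_jK(x_i,x_j)=y_i$ on the training set, where the training kernel matrix is assumed invertible. The quantity $S(1;2)$ is the representational salience of single components for two-component inputs, which for this kernel equals $(\kappa_1-\kappa_0)/(\kappa_2-\kappa_0)$. *)

theory Defs
  imports "HOL-Analysis.Analysis"
begin

text \<open>Two-component inputs: a component [v] is identified with its value v,
  an input is a pair (z1, z2) of components in slots 1 and 2.\<close>

definition shared :: "real \<times> real \<Rightarrow> real \<times> real \<Rightarrow> nat" where
  "shared x x' = (if fst x = fst x' then 1 else 0) + (if snd x = snd x' then 1 else 0)"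

definition comp_kernel :: "(nat \<Rightarrow> real) \<Rightarrow> real \<times> real \<Rightarrow> real \<times> real \<Rightarrow> real" where
  "comp_kernel \<kappa> x x' = \<kappa> (shared x x')"

definition train_set :: "real set \<Rightarrow> real set \<Rightarrow> (real \<times> real) set" where
  "train_set V W = {(v1, v2). v1 \<in> V \<and> v2 \<in> V \<and> (v1 \<in> W \<or> v2 \<in> W)}"

text \<open>The kernel matrix (K(x_i,x_j))_{i,j in T} is invertible, i.e. (being square)
  the associated linear map on coefficient vectors indexed by T is injective.\<close>
definition kernel_matrix_invertible ::
  "('x \<Rightarrow> 'x \<Rightarrow> real) \<Rightarrow> 'x set \<Rightarrow> bool" where
  "kernel_matrix_invertible K T \<longleftrightarrow>
     (\<forall>c. (\<forall>i\<in>T. (\<Sum>j\<in>T. c j * K i j) = 0) \<longrightarrow> (\<forall>j\<in>T. c j = 0))"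

text \<open>Dual form of the min-norm interpolating kernel model:
  f(x) = sum_i a_i K(x, x_i), with a solving the interpolation system on T.\<close>
definition kernel_model ::
  "('x \<Rightarrow> 'x \<Rightarrow> real) \<Rightarrow> 'x set \<Rightarrow> ('x \<Rightarrow> real) \<Rightarrow> 'x \<Rightarrow> real" where
  "kernel_model K T a x = (\<Sum>i\<in>T. a i * K x i)"

definition salience_1_2 :: "(nat \<Rightarrow> real) \<Rightarrow> real" where
  "salience_1_2 \<kappa> = (\<kappa> 1 - \<kappa> 0) / (\<kappa> 2 - \<kappa> 0)"

end

theory Submission imports Defs begin

text \<open>Write \<open>U = V - W\<close>, \<open>p = |W|\<close>, \<open>A = \<kappa>\<^sub>1 - \<kappa>\<^sub>0\<close> and \<open>B = \<kappa>\<^sub>2 - 2\<kappa>\<^sub>1 + \<kappa>\<^sub>0\<close>, so that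
  \<open>K(x, y) = \<kappa>\<^sub>0 + A ([x\<^sub>1 = y\<^sub>1] + [x\<^sub>2 = y\<^sub>2]) + B [x = y]\<close>. In the training set a component
  \<open>u \<in> W\<close> is paired with every \<open>v \<in> V\<close>, a component \<open>u \<in> U\<close> only with the \<open>v \<in> W\<close>.
  Hence, for \<open>h\<close> summing to zero over \<open>V\<close> and over \<open>W\<close>, the training kernel matrix maps the
  additive coefficient vector \<open>h(y\<^sub>1) + h(y\<^sub>2)\<close> to \<open>\<lambda>(x\<^sub>1) h(x\<^sub>1) + \<lambda>(x\<^sub>2) h(x\<^sub>2)\<close>, where
  \<open>\<lambda> = component_eigenvalue\<close> is \<open>A |V| + B\<close> on \<open>W\<close> and \<open>A p + B\<close> on \<open>U\<close>. Invertibility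
  forces \<open>\<lambda>(u) \<noteq> 0\<close> whenever \<open>u \<noteq> 0\<close>, so the unique interpolating coefficients are
  \<open>g(y\<^sub>1) + g(y\<^sub>2)\<close> with \<open>g(u) = u / \<lambda>(u)\<close> (component_weight). On a test pair in \<open>U \<times> U\<close>
  only the \<open>A\<close>-part of the kernel survives, giving \<open>f = A p / (A p + B) \<cdot> (v\<^sub>1 + v\<^sub>2)\<close>,
  which is the claimed ratio.\<close>

definition train_partners :: "real set \<Rightarrow> real set \<Rightarrow> real \<Rightarrow> real set" where
  "train_partners V W u = (if u \<in> W then V else W)"

definition component_eigenvalue :: "(nat \<Rightarrow> real) \<Rightarrow> real set \<Rightarrow> real set \<Rightarrow> real \<Rightarrow> real" where
  "component_eigenvalue \<kappa> V W u =
     (\<kappa> 1 - \<kappa> 0) * real (card (train_partners V W u)) + (\<kappa> 2 - 2 * \<kappa> 1 + \<kappa> 0)"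

definition component_weight :: "(nat \<Rightarrow> real) \<Rightarrow> real set \<Rightarrow> real set \<Rightarrow> real \<Rightarrow> real" where
  "component_weight \<kappa> V W u = u / component_eigenvalue \<kappa> V W u"

lemma kernel_matrix_invertibleD:
  assumes "kernel_matrix_invertible K T"
    and "\<forall>i\<in>T. (\<Sum>j\<in>T. c j * K i j) = 0" and "j \<in> T"
  shows "c j = 0"
  using assms unfolding kernel_matrix_invertible_def by blast

lemma kernel_matrix_invertible_coeffs_eq:
  assumes "kernel_matrix_invertible K T"
    and "\<forall>i\<in>T. (\<Sum>j\<in>T. c j * K i j) = (\<Sum>j\<in>T. d j * K i j)" and "j \<in> T"
  shows "c j = d j"
proof -
  have "\<forall>i\<in>T. (\<Sum>j\<in>T. (c j - d j) * K i j) = 0"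
    using assms(2) by (simp add: left_diff_distrib sum_subtractf)
  then show ?thesis
    using kernel_matrix_invertibleD[OF assms(1), of "\<lambda>j. c j - d j"] assms(3) by simp
qed

lemma obtain_other_if_sum_eq_0:
  fixes C :: "'a::comm_monoid_add set"
  assumes "(\<Sum>v\<in>C. v) = 0" and "u \<in> C" and "u \<noteq> 0"
  obtains u' where "u' \<in> C" and "u' \<noteq> u"
proof -
  have "C \<noteq> {u}"
    using assms by auto
  then show thesis
    using that assms(2) by blast
qed

lemma comp_kernel_eq:
  "comp_kernel \<kappa> x y = \<kappa> 0
     + (\<kappa> 1 - \<kappa> 0) * ((if fst y = fst x then 1 else 0) + (if snd y = snd x then 1 else 0))
     + (\<kappa> 2 - 2 * \<kappa> 1 + \<kappa> 0) * (if x = y then 1 else 0)"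
  by (cases x; cases y) (auto simp: comp_kernel_def shared_def numeral_2_eq_2)

lemma comp_kernel_row_sum:
  assumes "finite T"
  shows "(\<Sum>y\<in>T. c y * comp_kernel \<kappa> x y) = \<kappa> 0 * sum c T
     + (\<kappa> 1 - \<kappa> 0) * ((\<Sum>y\<in>T. if fst y = fst x then c y else 0)
                        + (\<Sum>y\<in>T. if snd y = snd x then c y else 0))
     + (\<kappa> 2 - 2 * \<kappa> 1 + \<kappa> 0) * (if x \<in> T then c x else 0)"
proof -
  have "(\<Sum>y\<in>T. c y * comp_kernel \<kappa> x y) = (\<Sum>y\<in>T. \<kappa> 0 * c y
      + (\<kappa> 1 - \<kappa> 0) * ((if fst y = fst x then c y else 0) + (if snd y = snd x then c y else 0))
      + (\<kappa> 2 - 2 * \<kappa> 1 + \<kappa> 0) * (if x = y then c y else 0))"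
    by (rule sum.cong) (auto simp: comp_kernel_eq algebra_simps)
  also have "\<dots> = \<kappa> 0 * sum c T
      + (\<kappa> 1 - \<kappa> 0) * ((\<Sum>y\<in>T. if fst y = fst x then c y else 0)
                         + (\<Sum>y\<in>T. if snd y = snd x then c y else 0))
      + (\<kappa> 2 - 2 * \<kappa> 1 + \<kappa> 0) * (\<Sum>y\<in>T. if x = y then c y else 0)"
    by (simp add: sum.distrib flip: sum_distrib_left)
  finally show ?thesis
    using assms by simp
qed

lemma train_set_eq_Sigma:
  assumes "W \<subseteq> V"
  shows "train_set V W = Sigma V (train_partners V W)"
  using assms by (auto simp: train_set_def train_partners_def split: if_splits)

lemma finite_train_set: "finite V \<Longrightarrow> finite (train_set V W)"
  by (rule finite_subset[of _ "V \<times> V"]) (auto simp: train_set_def)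

lemma sum_train_set_fst:
  assumes "finite V" and "W \<subseteq> V" and "u \<in> V"
  shows "(\<Sum>y\<in>train_set V W. if fst y = u then F y else 0)
       = (\<Sum>v\<in>train_partners V W u. F (u, v))"
proof -
  have fin: "\<forall>w\<in>V. finite (train_partners V W w)"
    using assms(1,2) finite_subset by (auto simp: train_partners_def)
  have "(\<Sum>y\<in>train_set V W. if fst y = u then F y else 0)
      = (\<Sum>w\<in>V. \<Sum>v\<in>train_partners V W w. if w = u then F (w, v) else 0)"
    unfolding train_set_eq_Sigma[OF assms(2)] sum.Sigma[OF assms(1) fin] by (rule sum.cong) auto
  also have "\<dots> = (\<Sum>w\<in>V. if w = u then (\<Sum>v\<in>train_partners V W w. F (w, v)) else 0)"
    by (rule sum.cong) auto
  finally show ?thesis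
    using assms(1,3) by simp
qed

lemma sum_train_set_snd:
  assumes "finite V" and "W \<subseteq> V" and "u \<in> V"
  shows "(\<Sum>y\<in>train_set V W. if snd y = u then F y else 0)
       = (\<Sum>v\<in>train_partners V W u. F (v, u))"
proof -
  have "(\<Sum>y\<in>train_set V W. if snd y = u then F y else 0)
      = (\<Sum>y\<in>train_set V W. if fst y = u then F (prod.swap y) else 0)"
    by (rule sum.reindex_bij_witness[of _ prod.swap prod.swap]) (auto simp: train_set_def)
  then show ?thesis
    using sum_train_set_fst[OF assms, of "\<lambda>y. F (prod.swap y)"] by simp
qed

lemma additive_coeffs_row_sum:
  assumes V: "finite V" and W: "W \<subseteq> V" and hV: "sum h V = 0" and hW: "sum h W = 0"
    and x: "x1 \<in> V" "x2 \<in> V"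
  shows "(\<Sum>y\<in>train_set V W. (h (fst y) + h (snd y)) * comp_kernel \<kappa> (x1, x2) y)
    = (\<kappa> 1 - \<kappa> 0) * (real (card (train_partners V W x1)) * h x1
                       + real (card (train_partners V W x2)) * h x2)
      + (\<kappa> 2 - 2 * \<kappa> 1 + \<kappa> 0) * (if (x1, x2) \<in> train_set V W then h x1 + h x2 else 0)"
proof -
  let ?T = "train_set V W" and ?P = "train_partners V W" and ?c = "\<lambda>y. h (fst y) + h (snd y)"
  have finP: "finite (?P u)" for u
    using V W finite_subset by (auto simp: train_partners_def)
  have hP: "sum h (?P u) = 0" for u
    using hV hW by (simp add: train_partners_def)
  have "sum ?c ?T = (\<Sum>u\<in>V. \<Sum>v\<in>?P u. h u + h v)"
    unfolding train_set_eq_Sigma[OF W] using V finP by (simp add: sum.Sigma case_prod_beta)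
  also have "\<dots> = (\<Sum>u\<in>V. if u \<in> W then real (card V) * h u else real (card W) * h u)"
    using finP hP by (intro sum.cong) (auto simp: sum.distrib train_partners_def)
  also have "\<dots> = real (card V) * sum h W + real (card W) * sum h (V - W)"
    using V W by (simp add: sum.If_cases Int_absorb1 Diff_eq sum_distrib_left)
  also have "\<dots> = 0"
    using V W hV hW by (simp add: sum_diff)
  finally have total: "sum ?c ?T = 0" .
  have slot1: "(\<Sum>y\<in>?T. if fst y = x1 then ?c y else 0) = real (card (?P x1)) * h x1"
    using sum_train_set_fst[OF V W x(1), of ?c] hP[of x1] by (simp add: sum.distrib)
  have slot2: "(\<Sum>y\<in>?T. if snd y = x2 then ?c y else 0) = real (card (?P x2)) * h x2"
    using sum_train_set_snd[OF V W x(2), of ?c] hP[of x2] by (simp add: sum.distrib)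
  show ?thesis
    using comp_kernel_row_sum[OF finite_train_set[OF V], of ?c \<kappa> "(x1, x2)"] total slot1 slot2
    by simp
qed

lemma additive_coeffs_train_row:
  assumes "finite V" and "W \<subseteq> V" and "sum h V = 0" and "sum h W = 0"
    and x: "(x1, x2) \<in> train_set V W"
  shows "(\<Sum>y\<in>train_set V W. (h (fst y) + h (snd y)) * comp_kernel \<kappa> (x1, x2) y)
    = component_eigenvalue \<kappa> V W x1 * h x1 + component_eigenvalue \<kappa> V W x2 * h x2"
proof -
  have "x1 \<in> V" "x2 \<in> V"
    using x by (auto simp: train_set_def)
  then show ?thesis
    unfolding additive_coeffs_row_sum[OF assms(1-4) \<open>x1 \<in> V\<close> \<open>x2 \<in> V\<close>]
    using x by (simp add: component_eigenvalue_def algebra_simps)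
qed

lemma additive_coeffs_test_row:
  assumes "finite V" and "W \<subseteq> V" and "sum h V = 0" and "sum h W = 0"
    and x: "x1 \<in> V - W" "x2 \<in> V - W"
  shows "(\<Sum>y\<in>train_set V W. (h (fst y) + h (snd y)) * comp_kernel \<kappa> (x1, x2) y)
    = (\<kappa> 1 - \<kappa> 0) * real (card W) * (h x1 + h x2)"
proof -
  have "x1 \<in> V" "x2 \<in> V" "(x1, x2) \<notin> train_set V W"
    using x by (auto simp: train_set_def)
  then show ?thesis
    unfolding additive_coeffs_row_sum[OF assms(1-4) \<open>x1 \<in> V\<close> \<open>x2 \<in> V\<close>]
    using x by (simp add: train_partners_def algebra_simps)
qed

lemma component_eigenvalue_nonzero:
  assumes V: "finite V" and W: "W \<subseteq> V" "W \<noteq> {}"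
    and inv: "kernel_matrix_invertible (comp_kernel \<kappa>) (train_set V W)"
    and u: "u \<in> V" "u' \<in> V" "u' \<noteq> u" and same_class: "u \<in> W \<longleftrightarrow> u' \<in> W"
  shows "component_eigenvalue \<kappa> V W u \<noteq> 0"
proof
  assume zero: "component_eigenvalue \<kappa> V W u = 0"
  define h where "h v = (if v = u then 1 else 0) - (if v = u' then 1 else 0 :: real)" for v
  have hV: "sum h V = 0" and hW: "sum h W = 0"
    using V W u same_class finite_subset[OF W(1) V] by (auto simp: h_def sum_subtractf)
  have "component_eigenvalue \<kappa> V W u' = component_eigenvalue \<kappa> V W u"
    using same_class by (simp add: component_eigenvalue_def train_partners_def)
  then have eig_h: "component_eigenvalue \<kappa> V W v * h v = 0" for v
    using zero by (simp add: h_def)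
  have "\<forall>x\<in>train_set V W.
      (\<Sum>y\<in>train_set V W. (h (fst y) + h (snd y)) * comp_kernel \<kappa> x y) = 0"
  proof
    fix x assume "x \<in> train_set V W"
    then have "(\<Sum>y\<in>train_set V W. (h (fst y) + h (snd y)) * comp_kernel \<kappa> x y)
        = component_eigenvalue \<kappa> V W (fst x) * h (fst x)
          + component_eigenvalue \<kappa> V W (snd x) * h (snd x)"
      using additive_coeffs_train_row[OF V W(1) hV hW, of "fst x" "snd x"] by simp
    then show "(\<Sum>y\<in>train_set V W. (h (fst y) + h (snd y)) * comp_kernel \<kappa> x y) = 0"
      by (simp only: eig_h add_0)
  qed
  note coeffs_zero = kernel_matrix_invertibleD[OF inv this]
  \<comment> \<open>on the training pair \<open>(u, w)\<close> the coefficient is \<open>h u + h w = 1 + [w = u] \<noteq> 0\<close>\<close>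
  obtain w where w: "w \<in> W" "w \<noteq> u'"
    using W(2) same_class u(3) by (metis all_not_in_conv)
  then have "(u, w) \<in> train_set V W"
    using u W by (auto simp: train_set_def)
  from coeffs_zero[OF this] show False
    using w u(3) by (auto simp: h_def split: if_splits)
qed

lemma sum_component_weight_eq_0:
  assumes V: "finite V" and W: "W \<subseteq> V" and sV: "(\<Sum>v\<in>V. v) = 0" and sW: "(\<Sum>v\<in>W. v) = 0"
  shows "sum (component_weight \<kappa> V W) W = 0" and "sum (component_weight \<kappa> V W) V = 0"
proof -
  let ?A = "\<kappa> 1 - \<kappa> 0" and ?B = "\<kappa> 2 - 2 * \<kappa> 1 + \<kappa> 0"
  have "sum (component_weight \<kappa> V W) W = (\<Sum>v\<in>W. v / (?A * real (card V) + ?B))"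
    by (intro sum.cong) (auto simp: component_weight_def component_eigenvalue_def train_partners_def)
  then show sum_W: "sum (component_weight \<kappa> V W) W = 0"
    using sW by (simp flip: sum_divide_distrib)
  have "sum (component_weight \<kappa> V W) (V - W) = (\<Sum>v\<in>V - W. v / (?A * real (card W) + ?B))"
    by (intro sum.cong) (auto simp: component_weight_def component_eigenvalue_def train_partners_def)
  also have "\<dots> = 0"
    using V W sV sW by (simp add: sum_diff flip: sum_divide_distrib)
  finally show "sum (component_weight \<kappa> V W) V = 0"
    using V W sum_W by (simp add: sum_diff)
qed

lemma component_eigenvalue_mult_weight:
  assumes V: "finite V" and W: "W \<subseteq> V" "W \<noteq> {}"
    and sV: "(\<Sum>v\<in>V. v) = 0" and sW: "(\<Sum>v\<in>W. v) = 0"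
    and inv: "kernel_matrix_invertible (comp_kernel \<kappa>) (train_set V W)"
    and u: "u \<in> V"
  shows "component_eigenvalue \<kappa> V W u * component_weight \<kappa> V W u = u"
proof (cases "u = 0")
  case False
  define C where "C = (if u \<in> W then W else V - W)"
  have "(\<Sum>v\<in>C. v) = 0" "u \<in> C"
    using V W sV sW u by (auto simp: C_def sum_diff)
  then obtain u' where "u' \<in> C" "u' \<noteq> u"
    using False by (rule obtain_other_if_sum_eq_0)
  then have "component_eigenvalue \<kappa> V W u \<noteq> 0"
    using component_eigenvalue_nonzero[OF V W inv u] W(1) by (auto simp: C_def split: if_splits)
  then show ?thesis
    by (simp add: component_weight_def)
qed (simp add: component_weight_def)

lemma interpolant_coeffs_eq:
  assumes V: "finite V" and W: "W \<subseteq> V" "W \<noteq> {}"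
    and sV: "(\<Sum>v\<in>V. v) = 0" and sW: "(\<Sum>v\<in>W. v) = 0"
    and inv: "kernel_matrix_invertible (comp_kernel \<kappa>) (train_set V W)"
    and interp: "\<forall>x\<in>train_set V W.
           (\<Sum>x'\<in>train_set V W. a x' * comp_kernel \<kappa> x x') = fst x + snd x"
    and y: "y \<in> train_set V W"
  shows "a y = component_weight \<kappa> V W (fst y) + component_weight \<kappa> V W (snd y)"
proof -
  let ?w = "component_weight \<kappa> V W"
  have "\<forall>x\<in>train_set V W. (\<Sum>x'\<in>train_set V W. a x' * comp_kernel \<kappa> x x')
      = (\<Sum>x'\<in>train_set V W. (?w (fst x') + ?w (snd x')) * comp_kernel \<kappa> x x')"
  proof
    fix x assume x: "x \<in> train_set V W"
    then have "fst x \<in> V" "snd x \<in> V"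
      by (auto simp: train_set_def)
    then show "(\<Sum>x'\<in>train_set V W. a x' * comp_kernel \<kappa> x x')
      = (\<Sum>x'\<in>train_set V W. (?w (fst x') + ?w (snd x')) * comp_kernel \<kappa> x x')"
      using interp x additive_coeffs_train_row[OF V W(1) sum_component_weight_eq_0(2,1)[OF V W(1) sV sW],
          of "fst x" "snd x"]
        component_eigenvalue_mult_weight[OF V W sV sW inv]
      by simp
  qed
  then show ?thesis
    by (rule kernel_matrix_invertible_coeffs_eq[OF inv _ y])
qed

lemma salience_ratio_eq:
  assumes "\<kappa> 0 < \<kappa> 2"
  shows "p * salience_1_2 \<kappa> / (1 + (p - 2) * salience_1_2 \<kappa>)
       = (\<kappa> 1 - \<kappa> 0) * p / ((\<kappa> 1 - \<kappa> 0) * p + (\<kappa> 2 - 2 * \<kappa> 1 + \<kappa> 0))"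
proof -
  have D: "\<kappa> 2 - \<kappa> 0 \<noteq> 0"
    using assms by simp
  have "1 + (p - 2) * salience_1_2 \<kappa>
      = ((\<kappa> 1 - \<kappa> 0) * p + (\<kappa> 2 - 2 * \<kappa> 1 + \<kappa> 0)) / (\<kappa> 2 - \<kappa> 0)"
    using D by (simp add: salience_1_2_def field_simps)
  moreover have "p * salience_1_2 \<kappa> = (\<kappa> 1 - \<kappa> 0) * p / (\<kappa> 2 - \<kappa> 0)"
    by (simp add: salience_1_2_def)
  ultimately show ?thesis
    using D by simp
qed

theorem proposition2:
  fixes V W :: "real set" and \<kappa> :: "nat \<Rightarrow> real" and a :: "real \<times> real \<Rightarrow> real"
    and v1 v2 :: real
  assumes "finite V" and "V \<noteq> {}" and "W \<subseteq> V" and "W \<noteq> {}"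
    and "(\<Sum>v\<in>V. v) / real (card V) = 0"
    and "(\<Sum>v\<in>W. v) / real (card W) = 0"
    and "\<kappa> 2 > \<kappa> 0"
    and "kernel_matrix_invertible (comp_kernel \<kappa>) (train_set V W)"
    and "\<forall>x\<in>train_set V W.
           (\<Sum>x'\<in>train_set V W. a x' * comp_kernel \<kappa> x x') = fst x + snd x"
    and "v1 \<in> V - W" and "v2 \<in> V - W"
  shows "kernel_model (comp_kernel \<kappa>) (train_set V W) a (v1, v2)
         = (real (card W) * salience_1_2 \<kappa> / (1 + (real (card W) - 2) * salience_1_2 \<kappa>))
           * (v1 + v2)"
proof -
  let ?w = "component_weight \<kappa> V W" and ?A = "\<kappa> 1 - \<kappa> 0" and ?p = "real (card W)"
  let ?e = "?A * ?p + (\<kappa> 2 - 2 * \<kappa> 1 + \<kappa> 0)"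
  have sV: "(\<Sum>v\<in>V. v) = 0"
    using assms(1,2,5) by simp
  have sW: "(\<Sum>v\<in>W. v) = 0"
    using assms(1,3,4,6) finite_subset by fastforce
  note sum_w = sum_component_weight_eq_0[OF assms(1,3) sV sW]
  have weight_test: "?w v = v / ?e" if "v \<in> V - W" for v
    using that by (simp add: component_weight_def component_eigenvalue_def train_partners_def)
  have "kernel_model (comp_kernel \<kappa>) (train_set V W) a (v1, v2)
      = (\<Sum>y\<in>train_set V W. (?w (fst y) + ?w (snd y)) * comp_kernel \<kappa> (v1, v2) y)"
    unfolding kernel_model_def
    using interpolant_coeffs_eq[OF assms(1,3,4) sV sW assms(8,9)] by (intro sum.cong) auto
  also have "\<dots> = ?A * ?p * (?w v1 + ?w v2)"
    using additive_coeffs_test_row[OF assms(1,3) sum_w(2,1) assms(10,11)] .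
  also have "\<dots> = ?A * ?p / ?e * (v1 + v2)"
    using weight_test[OF assms(10)] weight_test[OF assms(11)] by (simp flip: add_divide_distrib)
  finally show ?thesis
    using salience_ratio_eq[OF assms(7), of ?p] by simp
qed

end
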